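(* Let $\mathcal H$ be a separable complex Hilbert space, $A\in L(\mathcal H)^+$ and $B\in L(\mathcal H)$ with closed range. Then $B$ admits an $A$-inverse if and only if the pair $(A,R(B))$ is compatible.
   Context: $\|z\|_A=\langle Az,z\rangle^{1/2}$. $G\in L(\mathcal H)$ is an $A$-inverse of $B$ if for every $y\in\mathcal H$, $\|y-BGy\|_A\le\|y-Bx\|_A$ for all $x\in\mathcal H$. $(A,\mathcal S)$ is compatible if there exists $Q\in L(\mathcal H)$ with $Q^2=Q$, $R(Q)=\mathcal S$, $AQ=Q^*A$. *)

theory Defs
  imports "HOL-Analysis.Analysis"
begin

class complex_inner = real_normed_vector +
  fixes scaleC :: "complex \<Rightarrow> 'a \<Rightarrow> 'a"
    and cinner :: "'a \<Rightarrow> 'a \<Rightarrow> complex"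
  assumes scaleC_add_left: "scaleC (a + b) x = scaleC a x + scaleC b x"
    and scaleC_add_right: "scaleC a (x + y) = scaleC a x + scaleC a y"
    and scaleC_scaleC: "scaleC a (scaleC b x) = scaleC (a * b) x"
    and scaleC_one: "scaleC 1 x = x"
    and scaleR_scaleC: "scaleR r x = scaleC (complex_of_real r) x"
    and cinner_commute: "cinner x y = cnj (cinner y x)"
    and cinner_add_left: "cinner (x + y) z = cinner x z + cinner y z"
    and cinner_scaleC_left: "cinner (scaleC c x) y = c * cinner x y"
    and cinner_self_real: "Im (cinner x x) = 0"
    and cinner_self_nonneg: "0 \<le> Re (cinner x x)"
    and cinner_self_zero: "cinner x x = 0 \<longleftrightarrow> x = 0"
    and norm_cinner: "norm x = sqrt (Re (cinner x x))"

class complex_hilbert = complex_inner + complete_space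

definition separable_type :: "'a::topological_space itself \<Rightarrow> bool" where
  "separable_type _ \<longleftrightarrow> (\<exists>D::'a set. countable D \<and> closure D = UNIV)"

definition bounded_clinear :: "('a::complex_inner \<Rightarrow> 'b::complex_inner) \<Rightarrow> bool" where
  "bounded_clinear T \<longleftrightarrow> bounded_linear T \<and> (\<forall>c x. T (scaleC c x) = scaleC c (T x))"

text \<open>Hilbert adjoint (exists and is unique for bounded operators, by Riesz).\<close>

definition cadjoint :: "('a::complex_inner \<Rightarrow> 'a) \<Rightarrow> ('a \<Rightarrow> 'a)" where
  "cadjoint T = (SOME S. \<forall>x y. cinner (T x) y = cinner x (S y))"

definition positive_op :: "('a::complex_inner \<Rightarrow> 'a) \<Rightarrow> bool" where
  "positive_op A \<longleftrightarrow> bounded_clinear A \<and>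
     (\<forall>x. Im (cinner (A x) x) = 0 \<and> 0 \<le> Re (cinner (A x) x))"

definition A_norm :: "('a::complex_inner \<Rightarrow> 'a) \<Rightarrow> 'a \<Rightarrow> real" where
  "A_norm A z = sqrt (Re (cinner (A z) z))"

definition is_A_inverse :: "('a::complex_inner \<Rightarrow> 'a) \<Rightarrow> ('a \<Rightarrow> 'a) \<Rightarrow> ('a \<Rightarrow> 'a) \<Rightarrow> bool" where
  "is_A_inverse A B G \<longleftrightarrow> bounded_clinear G \<and>
     (\<forall>y x. A_norm A (y - B (G y)) \<le> A_norm A (y - B x))"

definition compatible :: "('a::complex_inner \<Rightarrow> 'a) \<Rightarrow> 'a set \<Rightarrow> bool" where
  "compatible A S \<longleftrightarrow> (\<exists>Q. bounded_clinear Q \<and> Q \<circ> Q = Q \<and> range Q = S \<and>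
      A \<circ> Q = cadjoint Q \<circ> A)"

end

theory Submission
  imports Defs
begin

text \<open>If \<open>G\<close> is an \<open>A\<close>-inverse of \<open>B\<close>, minimality of the residual \<open>y - B (G y)\<close> makes it
  \<open>A\<close>-orthogonal to \<open>R(B)\<close>. Then \<open>Q y = B (G y) + P y'\<close>, where \<open>P\<close> is the orthogonal projection
  onto \<open>R(B) \<inter> N(A)\<close> and \<open>y' = y - B (G y)\<close>, is an idempotent with range \<open>R(B)\<close> which is
  selfadjoint for the semi-inner product \<open>\<langle>A_,_\<rangle>\<close>, i.e. \<open>AQ = Q\<^sup>*A\<close>.
  Conversely, if \<open>Q\<close> is such a projection, then \<open>y - Q y\<close> is \<open>A\<close>-orthogonal to \<open>R(B)\<close>, so \<open>Q y\<close> is an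
  \<open>A\<close>-closest point of \<open>R(B)\<close> to \<open>y\<close> by Pythagoras. It remains to lift \<open>Q\<close> through \<open>B\<close> to a bounded
  \<open>G\<close> with \<open>BG = Q\<close>; this is where the closed range enters, via the open mapping theorem
  and the projection onto \<open>N(B)\<^sup>\<bottom>\<close>.\<close>

section \<open>Complex inner product spaces\<close>

lemma cinner_zero_left [simp]: "cinner 0 (y::'a::complex_inner) = 0"
  using cinner_add_left[of "0::'a" 0 y] by simp

lemma cinner_add_right: "cinner (x::'a::complex_inner) (y + z) = cinner x y + cinner x z"
  using cinner_commute[of x "y + z"] cinner_commute[of x y] cinner_commute[of x z]
  by (simp add: cinner_add_left)

lemma cinner_zero_right [simp]: "cinner (x::'a::complex_inner) 0 = 0"
  using cinner_commute[of x 0] by simp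

lemma cinner_minus_left: "cinner (- x) (y::'a::complex_inner) = - cinner x y"
  using cinner_add_left[of x "-x" y] by (simp add: eq_neg_iff_add_eq_0 add.commute)

lemma cinner_diff_left: "cinner (x - z) (y::'a::complex_inner) = cinner x y - cinner z y"
  unfolding diff_conv_add_uminus by (simp only: cinner_add_left cinner_minus_left)

lemma cinner_minus_right: "cinner (x::'a::complex_inner) (- y) = - cinner x y"
  using cinner_commute[of x "- y"] cinner_commute[of x y] by (simp add: cinner_minus_left)

lemma cinner_diff_right: "cinner (x::'a::complex_inner) (y - z) = cinner x y - cinner x z"
  unfolding diff_conv_add_uminus by (simp only: cinner_add_right cinner_minus_right)

lemma cinner_scaleC_right: "cinner (x::'a::complex_inner) (scaleC c y) = cnj c * cinner x y"
  using cinner_commute[of x "scaleC c y"] cinner_commute[of x y] by (simp add: cinner_scaleC_left)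

lemma cinner_scaleR_left: "cinner (scaleR r x) (y::'a::complex_inner) = of_real r * cinner x y"
  by (simp add: scaleR_scaleC cinner_scaleC_left)

lemma power2_norm_eq_cinner: "(norm (x::'a::complex_inner))\<^sup>2 = Re (cinner x x)"
  by (simp add: norm_cinner cinner_self_nonneg)

lemma cinner_self_eq_power2_norm: "cinner (x::'a::complex_inner) x = complex_of_real ((norm x)\<^sup>2)"
  by (simp add: power2_norm_eq_cinner complex_eq_iff cinner_self_real)

lemma Re_cinner_commute: "Re (cinner (x::'a::complex_inner) y) = Re (cinner y x)"
  by (subst cinner_commute) simp

lemma power2_norm_add:
  "(norm ((x::'a::complex_inner) + y))\<^sup>2 = (norm x)\<^sup>2 + (norm y)\<^sup>2 + 2 * Re (cinner x y)"
  by (simp add: power2_norm_eq_cinner cinner_add_left cinner_add_right Re_cinner_commute[of y x])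

lemma parallelogram_law:
  "(norm ((a::'a::complex_inner) + b))\<^sup>2 + (norm (a - b))\<^sup>2 = 2 * (norm a)\<^sup>2 + 2 * (norm b)\<^sup>2"
  by (simp add: power2_norm_eq_cinner cinner_add_left cinner_add_right cinner_diff_left
      cinner_diff_right)

lemma cinner_extensionality_right:
  assumes "\<And>z. cinner z a = cinner z (b::'a::complex_inner)"
  shows "a = b"
proof -
  have "cinner (a - b) (a - b) = 0"
    using assms[of "a - b"] by (simp add: cinner_diff_right)
  thus ?thesis using cinner_self_zero[of "a - b"] by simp
qed

lemma scaleC_zero_left [simp]: "scaleC 0 (x::'a::complex_inner) = 0"
  using scaleC_add_left[of 0 0 x] by simp

lemma scaleC_zero_right [simp]: "scaleC c (0::'a::complex_inner) = 0"
  using scaleC_add_right[of c "0::'a" 0] by simp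

lemma scaleC_minus_right: "scaleC c (- x::'a::complex_inner) = - scaleC c x"
  using scaleC_add_right[of c x "-x"] by (simp add: eq_neg_iff_add_eq_0 add.commute)

lemma scaleC_diff_right: "scaleC c (x - y::'a::complex_inner) = scaleC c x - scaleC c y"
  unfolding diff_conv_add_uminus by (simp only: scaleC_add_right scaleC_minus_right)

lemma scaleC_minus1_left: "scaleC (-1) (x::'a::complex_inner) = - x"
  using scaleC_add_left[of 1 "-1" x] by (simp add: scaleC_one eq_neg_iff_add_eq_0 add.commute)

lemma norm_scaleC: "norm (scaleC c (x::'a::complex_inner)) = cmod c * norm x"
proof -
  have "cinner (scaleC c x) (scaleC c x) = (c * cnj c) * cinner x x"
    by (simp add: cinner_scaleC_left cinner_scaleC_right mult.assoc)
  also have "\<dots> = of_real ((cmod c)\<^sup>2 * (norm x)\<^sup>2)"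
    by (simp only: complex_norm_square[symmetric] cinner_self_eq_power2_norm of_real_mult)
  finally have "(norm (scaleC c x))\<^sup>2 = (cmod c * norm x)\<^sup>2"
    by (simp add: power2_norm_eq_cinner power_mult_distrib)
  thus ?thesis by (rule power2_eq_imp_eq) auto
qed

lemma Cauchy_Schwarz_cinner: "cmod (cinner (x::'a::complex_inner) y) \<le> norm x * norm y"
proof (cases "y = 0")
  case True
  thus ?thesis by simp
next
  case False
  define c where "c = cinner x y / cinner y y"
  define z where "z = x - scaleC c y"
  have yy: "cinner y y \<noteq> 0" using False cinner_self_zero[of y] by simp
  have "cinner z y = 0"
    unfolding z_def c_def using yy by (simp add: cinner_diff_left cinner_scaleC_left)
  hence "(norm x)\<^sup>2 = (norm z)\<^sup>2 + (cmod c * norm y)\<^sup>2"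
    using power2_norm_add[of z "scaleC c y"]
    by (simp add: z_def cinner_scaleC_right norm_scaleC)
  hence "(cmod c * norm y)\<^sup>2 \<le> (norm x)\<^sup>2" by simp
  hence cx: "cmod c * norm y \<le> norm x" by (rule power2_le_imp_le) simp
  have "cmod (cinner x y) = cmod c * cmod (cinner y y)"
    using yy by (simp add: c_def norm_divide)
  also have "\<dots> = (cmod c * norm y) * norm y"
    by (simp add: cinner_self_eq_power2_norm power2_eq_square norm_mult)
  also have "\<dots> \<le> norm x * norm y" using cx by (rule mult_right_mono) simp
  finally show ?thesis .
qed

lemma bounded_linear_cinner_left: "bounded_linear (\<lambda>x::'a::complex_inner. cinner x y)"
  by (rule bounded_linear_intro[where K="norm y"])
     (auto simp: cinner_add_left cinner_scaleR_left Cauchy_Schwarz_cinner scaleR_conv_of_real)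

definition csubspace :: "'a::complex_inner set \<Rightarrow> bool" where
  "csubspace M \<longleftrightarrow> 0 \<in> M \<and> (\<forall>x\<in>M. \<forall>y\<in>M. x + y \<in> M) \<and> (\<forall>c. \<forall>x\<in>M. scaleC c x \<in> M)"

lemma csubspace_0: "csubspace M \<Longrightarrow> 0 \<in> M"
  by (simp add: csubspace_def)

lemma csubspace_add: "csubspace M \<Longrightarrow> x \<in> M \<Longrightarrow> y \<in> M \<Longrightarrow> x + y \<in> M"
  by (simp add: csubspace_def)

lemma csubspace_scaleC: "csubspace M \<Longrightarrow> x \<in> M \<Longrightarrow> scaleC c x \<in> M"
  by (simp add: csubspace_def)

lemma csubspace_diff: "csubspace M \<Longrightarrow> x \<in> M \<Longrightarrow> y \<in> M \<Longrightarrow> x - y \<in> M"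
  by (metis csubspace_add csubspace_scaleC scaleC_minus1_left diff_conv_add_uminus)

lemma csubspace_scaleR: "csubspace M \<Longrightarrow> x \<in> M \<Longrightarrow> scaleR r x \<in> M"
  by (simp add: csubspace_scaleC scaleR_scaleC)

lemma csubspace_Int: "csubspace M \<Longrightarrow> csubspace N \<Longrightarrow> csubspace (M \<inter> N)"
  by (simp add: csubspace_def)

definition hermitian :: "('a::complex_inner \<Rightarrow> 'a) \<Rightarrow> bool" where
  "hermitian A \<longleftrightarrow> (\<forall>x y. cinner (A x) y = cinner x (A y))"

lemma cinner_expand_quadratic:
  fixes A :: "'a::complex_inner \<Rightarrow> 'a"
  assumes "linear A"
  shows "cinner (A (u + v)) (u + v) = cinner (A u) u + cinner (A u) v + cinner (A v) u + cinner (A v) v"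
  by (simp add: linear_add[OF assms] cinner_add_left cinner_add_right)

lemma hermitian_if_quadratic_real:
  fixes A :: "'a::complex_inner \<Rightarrow> 'a"
  assumes lin: "linear A" and hom: "\<And>c x. A (scaleC c x) = scaleC c (A x)"
    and real: "\<And>x. Im (cinner (A x) x) = 0"
  shows "hermitian A"
  unfolding hermitian_def
proof (intro allI)
  fix x y
  have "Im (cinner (A x) y + cinner (A y) x) = 0"
    using real[of "x + y"] real[of x] real[of y] cinner_expand_quadratic[OF lin, of x y] by simp
  moreover have "Re (cinner (A y) x) - Re (cinner (A x) y) = 0"
    using real[of "x + scaleC \<i> y"] real[of x] real[of y]
      cinner_expand_quadratic[OF lin, of x "scaleC \<i> y"]
    by (simp add: hom cinner_scaleC_left cinner_scaleC_right)
  ultimately have "cinner (A x) y = cnj (cinner (A y) x)" by (simp add: complex_eq_iff)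
  thus "cinner (A x) y = cinner x (A y)" by (simp add: cinner_commute[of x])
qed

lemma eq_0_if_Re_cnj_mult_le:
  fixes \<alpha> :: complex and \<beta> :: real
  assumes "\<And>c. 2 * Re (cnj c * \<alpha>) \<le> (cmod c)\<^sup>2 * \<beta>"
  shows "\<alpha> = 0"
proof -
  define t where "t = 1 / (\<bar>\<beta>\<bar> + 1)"
  have t0: "0 < t" by (simp add: t_def add_pos_nonneg)
  have tb: "t * \<beta> < 1" unfolding t_def by (simp add: field_simps)
  have "2 * Re (cnj (of_real t * \<alpha>) * \<alpha>) \<le> (cmod (of_real t * \<alpha>))\<^sup>2 * \<beta>" by (rule assms)
  moreover have "Re (cnj (of_real t * \<alpha>) * \<alpha>) = t * (cmod \<alpha>)\<^sup>2"
    by (simp add: mult.assoc complex_norm_square[symmetric] mult.commute[of "cnj \<alpha>"])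
  moreover have "(cmod (of_real t * \<alpha>))\<^sup>2 = t\<^sup>2 * (cmod \<alpha>)\<^sup>2"
    using t0 by (simp add: norm_mult power_mult_distrib)
  ultimately have "2 * t * (cmod \<alpha>)\<^sup>2 \<le> t * (cmod \<alpha>)\<^sup>2 * (t * \<beta>)"
    by (simp add: power2_eq_square mult_ac)
  hence "2 * (cmod \<alpha>)\<^sup>2 \<le> (cmod \<alpha>)\<^sup>2 * (t * \<beta>)" using t0 by (simp add: mult.assoc)
  moreover have "(cmod \<alpha>)\<^sup>2 * (t * \<beta>) \<le> (cmod \<alpha>)\<^sup>2" using tb by (simp add: mult_left_le)
  ultimately have "(cmod \<alpha>)\<^sup>2 \<le> 0" by linarith
  thus ?thesis by simp
qed

text \<open>First-order condition: perturbing a minimiser \<open>r\<close> by \<open>c w\<close> shows that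
  \<open>2 Re (c\<^sup>* \<langle>Ar,w\<rangle>) \<le> |c|\<^sup>2 \<langle>Aw,w\<rangle>\<close> for every \<open>c\<close>.\<close>

lemma quadratic_minimizer_orthogonal:
  fixes A :: "'a::complex_inner \<Rightarrow> 'a"
  assumes lin: "linear A" and hom: "\<And>c x. A (scaleC c x) = scaleC c (A x)"
    and herm: "hermitian A" and S: "csubspace S"
    and min: "\<And>w. w \<in> S \<Longrightarrow> Re (cinner (A r) r) \<le> Re (cinner (A (r - w)) (r - w))"
    and w: "w \<in> S"
  shows "cinner (A r) w = 0"
proof (rule eq_0_if_Re_cnj_mult_le)
  fix c
  define v where "v = scaleC c w"
  have "cinner (A (r - v)) (r - v) = cinner (A r) r - cinner (A r) v - cinner (A v) r + cinner (A v) v"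
    using linear_diff[OF lin] by (simp add: cinner_diff_left cinner_diff_right)
  moreover have "Re (cinner (A v) r) = Re (cinner (A r) v)"
    using herm by (simp add: hermitian_def Re_cinner_commute[of v])
  moreover have "cinner (A r) v = cnj c * cinner (A r) w"
    by (simp add: v_def cinner_scaleC_right)
  moreover have "cinner (A v) v = of_real ((cmod c)\<^sup>2) * cinner (A w) w"
    by (simp add: v_def hom cinner_scaleC_left cinner_scaleC_right complex_norm_square
        del: of_real_power)
  moreover have "v \<in> S" using S w by (simp add: v_def csubspace_scaleC)
  ultimately show "2 * Re (cnj c * cinner (A r) w) \<le> (cmod c)\<^sup>2 * Re (cinner (A w) w)"
    using min[of v] by simp
qed

section \<open>Orthogonal projections onto closed subspaces\<close>

lemma minimizing_sequence_Cauchy: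
  fixes M :: "'a::complex_inner set"
  assumes S: "csubspace M" and s: "\<And>n. s n \<in> M"
    and d: "0 \<le> d" "\<And>m. m \<in> M \<Longrightarrow> d \<le> norm (x - m)"
    and approx: "\<And>n. (norm (x - s n))\<^sup>2 < d\<^sup>2 + inverse (real (Suc n))"
  shows "Cauchy s"
proof (rule metric_CauchyI)
  have est: "(norm (s i - s j))\<^sup>2 < 2 * inverse (real (Suc i)) + 2 * inverse (real (Suc j))" for i j
  proof -
    have "(1/2) *\<^sub>R (s i + s j) \<in> M" using S s by (intro csubspace_scaleR csubspace_add)
    hence "d \<le> norm (x - (1/2) *\<^sub>R (s i + s j))" by (rule d(2))
    also have "(x - s i) + (x - s j) = 2 *\<^sub>R (x - (1/2) *\<^sub>R (s i + s j))"
      by (simp add: algebra_simps scaleR_2)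
    hence "norm (x - (1/2) *\<^sub>R (s i + s j)) = norm ((x - s i) + (x - s j)) / 2" by simp
    finally have "(2 * d)\<^sup>2 \<le> (norm ((x - s i) + (x - s j)))\<^sup>2"
      using d(1) by (intro power_mono) auto
    moreover have "norm ((x - s i) - (x - s j)) = norm (s i - s j)"
      by (simp add: norm_minus_commute)
    ultimately show ?thesis
      using parallelogram_law[of "x - s i" "x - s j"] approx[of i] approx[of j]
      by (simp add: power_mult_distrib)
  qed
  fix e :: real
  assume e: "0 < e"
  obtain N :: nat where N: "4 / e\<^sup>2 < real N" using reals_Archimedean2 by blast
  show "\<exists>M. \<forall>m\<ge>M. \<forall>n\<ge>M. dist (s m) (s n) < e"
  proof (intro exI allI impI)
    fix i j
    assume "N \<le> i" "N \<le> j"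
    hence "inverse (real (Suc i)) \<le> inverse (real (Suc N))"
      "inverse (real (Suc j)) \<le> inverse (real (Suc N))"
      by (simp_all add: le_imp_inverse_le)
    moreover have "4 < e\<^sup>2 * real N" using N e by (simp add: field_simps)
    hence "4 < e\<^sup>2 * real (Suc N)" using e by (simp add: distrib_left) (smt (verit) zero_less_power)
    hence "4 * inverse (real (Suc N)) < e\<^sup>2" by (simp add: field_simps)
    ultimately have "(norm (s i - s j))\<^sup>2 < e\<^sup>2" using est[of i j] by linarith
    thus "dist (s i) (s j) < e" using e by (simp add: dist_norm power_less_imp_less_base)
  qed
qed

lemma closest_point_in_closed_csubspace:
  fixes M :: "'a::complex_hilbert set"
  assumes cl: "closed M" and S: "csubspace M"
  shows "\<exists>p\<in>M. \<forall>m\<in>M. norm (x - p) \<le> norm (x - m)"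
proof -
  define d where "d = Inf ((\<lambda>m. norm (x - m)) ` M)"
  have ne: "M \<noteq> {}" using csubspace_0[OF S] by auto
  have bdd: "bdd_below ((\<lambda>m. norm (x - m)) ` M)" by (rule bdd_belowI[where m=0]) auto
  have dle: "d \<le> norm (x - m)" if "m \<in> M" for m
    unfolding d_def using bdd that by (auto intro: cInf_lower)
  have d0: "0 \<le> d" unfolding d_def using ne by (auto intro: cInf_greatest)
  have "\<exists>m\<in>M. (norm (x - m))\<^sup>2 < d\<^sup>2 + inverse (real (Suc n))" for n
  proof -
    have "d < sqrt (d\<^sup>2 + inverse (real (Suc n)))" using d0 by (intro real_less_rsqrt) simp
    then obtain m where m: "m \<in> M" "norm (x - m) < sqrt (d\<^sup>2 + inverse (real (Suc n)))"
      using cInf_lessD[of "(\<lambda>m. norm (x - m)) ` M"] ne unfolding d_def by auto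
    have "(norm (x - m))\<^sup>2 < (sqrt (d\<^sup>2 + inverse (real (Suc n))))\<^sup>2"
      using m(2) by (intro power_strict_mono) auto
    thus ?thesis using m(1) by (auto simp: add_nonneg_nonneg)
  qed
  then obtain s where s: "\<And>n. s n \<in> M" "\<And>n. (norm (x - s n))\<^sup>2 < d\<^sup>2 + inverse (real (Suc n))"
    by metis
  have "Cauchy s" by (rule minimizing_sequence_Cauchy[OF S s(1) d0 dle s(2)])
  then obtain p where p: "s \<longlonglongrightarrow> p" using Cauchy_convergent_iff convergent_def by blast
  have "(\<lambda>n. (norm (x - s n))\<^sup>2) \<longlonglongrightarrow> (norm (x - p))\<^sup>2" by (intro tendsto_intros p)
  moreover have "(\<lambda>n. d\<^sup>2 + inverse (real (Suc n))) \<longlonglongrightarrow> d\<^sup>2 + 0"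
    by (intro tendsto_add tendsto_const LIMSEQ_inverse_real_of_nat)
  ultimately have "(norm (x - p))\<^sup>2 \<le> d\<^sup>2"
    using s(2) by (intro LIMSEQ_le) (auto intro: less_imp_le)
  hence "norm (x - p) \<le> d" using d0 by (rule power2_le_imp_le)
  moreover have "p \<in> M" using closed_sequentially[OF cl] s(1) p by blast
  ultimately show ?thesis using dle by (blast intro: order_trans)
qed

lemma orthogonal_projection_exists:
  fixes M :: "'a::complex_hilbert set"
  assumes cl: "closed M" and S: "csubspace M"
  shows "\<exists>p\<in>M. \<forall>m\<in>M. cinner (x - p) m = 0"
proof -
  obtain p where p: "p \<in> M" and min: "\<And>m. m \<in> M \<Longrightarrow> norm (x - p) \<le> norm (x - m)"
    using closest_point_in_closed_csubspace[OF cl S] by blast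
  have "Re (cinner (id (x - p)) (x - p)) \<le> Re (cinner (id (x - p - w)) (x - p - w))"
    if "w \<in> M" for w
  proof -
    have "norm (x - p) \<le> norm (x - (p + w))" using S p that by (intro min csubspace_add)
    hence "(norm (x - p))\<^sup>2 \<le> (norm (x - (p + w)))\<^sup>2" by (intro power_mono) auto
    thus ?thesis by (simp only: power2_norm_eq_cinner diff_diff_eq id_apply)
  qed
  moreover have "hermitian (id :: 'a \<Rightarrow> 'a)" by (simp add: hermitian_def)
  ultimately have "cinner (id (x - p)) m = 0" if "m \<in> M" for m
    using that by (intro quadratic_minimizer_orthogonal[OF linear_id _ _ S]) auto
  with p show ?thesis by auto
qed

definition cproj :: "'a::complex_inner set \<Rightarrow> 'a \<Rightarrow> 'a" where
  "cproj M x = (SOME p. p \<in> M \<and> (\<forall>m\<in>M. cinner (x - p) m = 0))"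

lemma cproj:
  fixes M :: "'a::complex_hilbert set"
  assumes "closed M" "csubspace M"
  shows cproj_in: "cproj M x \<in> M"
    and cproj_orthogonal: "m \<in> M \<Longrightarrow> cinner (x - cproj M x) m = 0"
proof -
  have "\<exists>p. p \<in> M \<and> (\<forall>m\<in>M. cinner (x - p) m = 0)"
    using orthogonal_projection_exists[OF assms] by blast
  hence "cproj M x \<in> M \<and> (\<forall>m\<in>M. cinner (x - cproj M x) m = 0)"
    unfolding cproj_def by (rule someI_ex)
  thus "cproj M x \<in> M" "m \<in> M \<Longrightarrow> cinner (x - cproj M x) m = 0" by auto
qed

lemma cproj_unique:
  fixes M :: "'a::complex_hilbert set"
  assumes cl: "closed M" and S: "csubspace M" and p: "p \<in> M"
    and orth: "\<And>m. m \<in> M \<Longrightarrow> cinner (x - p) m = 0"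
  shows "cproj M x = p"
proof -
  let ?q = "cproj M x"
  have d: "p - ?q \<in> M" using S p cproj_in[OF cl S] by (rule csubspace_diff)
  have "cinner (p - ?q) (p - ?q) = cinner (x - ?q) (p - ?q) - cinner (x - p) (p - ?q)"
    by (simp flip: cinner_diff_left)
  also have "\<dots> = 0" using cproj_orthogonal[OF cl S d] orth[OF d] by simp
  finally show ?thesis using cinner_self_zero[of "p - ?q"] by simp
qed

lemma cproj_id:
  fixes M :: "'a::complex_hilbert set"
  assumes "closed M" "csubspace M" "m \<in> M"
  shows "cproj M m = m"
  by (rule cproj_unique[OF assms]) simp

lemma cproj_add:
  fixes M :: "'a::complex_hilbert set"
  assumes cl: "closed M" and S: "csubspace M"
  shows "cproj M (x + y) = cproj M x + cproj M y"
proof (rule cproj_unique[OF cl S])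
  show "cproj M x + cproj M y \<in> M" using cproj_in[OF cl S] S by (simp add: csubspace_add)
  have eq: "x + y - (cproj M x + cproj M y) = (x - cproj M x) + (y - cproj M y)" by simp
  show "cinner (x + y - (cproj M x + cproj M y)) m = 0" if "m \<in> M" for m
    by (subst eq) (simp add: cinner_add_left cproj_orthogonal[OF cl S that])
qed

lemma cproj_scaleC:
  fixes M :: "'a::complex_hilbert set"
  assumes cl: "closed M" and S: "csubspace M"
  shows "cproj M (scaleC c x) = scaleC c (cproj M x)"
proof (rule cproj_unique[OF cl S])
  show "scaleC c (cproj M x) \<in> M" using cproj_in[OF cl S] S by (simp add: csubspace_scaleC)
  have eq: "scaleC c x - scaleC c (cproj M x) = scaleC c (x - cproj M x)"
    by (simp add: scaleC_diff_right)
  show "cinner (scaleC c x - scaleC c (cproj M x)) m = 0" if "m \<in> M" for m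
    by (subst eq) (simp add: cinner_scaleC_left cproj_orthogonal[OF cl S that])
qed

lemma norm_cproj_le:
  fixes M :: "'a::complex_hilbert set"
  assumes cl: "closed M" and S: "csubspace M"
  shows "norm (cproj M x) \<le> norm x" "norm (x - cproj M x) \<le> norm x"
proof -
  have "(norm x)\<^sup>2 = (norm (x - cproj M x))\<^sup>2 + (norm (cproj M x))\<^sup>2"
    using power2_norm_add[of "x - cproj M x" "cproj M x"] cproj[OF cl S] by simp
  thus "norm (cproj M x) \<le> norm x" "norm (x - cproj M x) \<le> norm x"
    by (auto intro: power2_le_imp_le)
qed

lemma bounded_clinear_intro:
  assumes "\<And>x y. f (x + y) = f x + f y" "\<And>c x. f (scaleC c x) = scaleC c (f x)"
    "\<And>x. norm (f x) \<le> norm x * K"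
  shows "bounded_clinear f"
  unfolding bounded_clinear_def using assms
  by (auto intro!: bounded_linear_intro[where K=K] simp: scaleR_scaleC)

lemma bounded_clinear_imp_bounded_linear: "bounded_clinear f \<Longrightarrow> bounded_linear f"
  by (simp add: bounded_clinear_def)

lemma bounded_clinear_imp_linear: "bounded_clinear f \<Longrightarrow> linear f"
  by (simp add: bounded_clinear_def bounded_linear.linear)

lemma bounded_clinear_scaleC: "bounded_clinear f \<Longrightarrow> f (scaleC c x) = scaleC c (f x)"
  by (simp add: bounded_clinear_def)

lemma bounded_clinear_compose:
  "bounded_clinear f \<Longrightarrow> bounded_clinear g \<Longrightarrow> bounded_clinear (\<lambda>x. f (g x))"
  unfolding bounded_clinear_def using bounded_linear_compose by auto

lemma bounded_clinear_add:
  "bounded_clinear f \<Longrightarrow> bounded_clinear g \<Longrightarrow> bounded_clinear (\<lambda>x. f x + g x)"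
  unfolding bounded_clinear_def using bounded_linear_add by (auto simp: scaleC_add_right)

lemma bounded_clinear_diff:
  "bounded_clinear f \<Longrightarrow> bounded_clinear g \<Longrightarrow> bounded_clinear (\<lambda>x. f x - g x)"
  unfolding bounded_clinear_def using bounded_linear_sub by (auto simp: scaleC_diff_right)

lemma bounded_clinear_ident: "bounded_clinear (\<lambda>x. x)"
  unfolding bounded_clinear_def by (simp add: bounded_linear_ident)

lemma bounded_clinear_cproj:
  fixes M :: "'a::complex_hilbert set"
  assumes cl: "closed M" and S: "csubspace M"
  shows "bounded_clinear (cproj M)"
  by (rule bounded_clinear_intro[where K=1])
     (auto simp: cproj_add[OF cl S] cproj_scaleC[OF cl S] norm_cproj_le[OF cl S])

lemma csubspace_range:
  assumes B: "bounded_clinear B"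
  shows "csubspace (range B)"
  unfolding csubspace_def
proof (intro conjI ballI allI)
  have lin: "linear B" using B by (rule bounded_clinear_imp_linear)
  show "0 \<in> range B" using linear_0[OF lin] by (metis rangeI)
  show "u + v \<in> range B" if "u \<in> range B" "v \<in> range B" for u v
    using that by (auto simp flip: linear_add[OF lin])
  show "scaleC c u \<in> range B" if "u \<in> range B" for c u
    using that by (auto simp flip: bounded_clinear_scaleC[OF B])
qed

lemma csubspace_kernel: "bounded_clinear B \<Longrightarrow> csubspace {x. B x = 0}"
  unfolding csubspace_def
  by (simp add: bounded_clinear_imp_linear bounded_clinear_scaleC linear_0 linear_add)

lemma closed_kernel:
  assumes "bounded_clinear B"
  shows "closed {x. B x = 0}"
proof -
  have "continuous_on UNIV B"
    using assms by (intro linear_continuous_on bounded_clinear_imp_bounded_linear)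
  thus ?thesis by (intro closed_Collect_eq continuous_on_const) auto
qed

section \<open>Riesz representation and adjoints\<close>

lemma Riesz_representation:
  fixes f :: "'a::complex_hilbert \<Rightarrow> complex"
  assumes bl: "bounded_linear f" and hom: "\<And>c x. f (scaleC c x) = c * f x"
  shows "\<exists>z. \<forall>x. f x = cinner x z"
proof (cases "\<forall>x. f x = 0")
  case True
  thus ?thesis by (auto intro: exI[of _ 0])
next
  case False
  then obtain x0 where x0: "f x0 \<noteq> 0" by auto
  have lin: "linear f" using bl by (rule bounded_linear.linear)
  define M where "M = {x. f x = 0}"
  have cl: "closed M" unfolding M_def
    by (intro closed_Collect_eq linear_continuous_on bl continuous_on_const)
  have S: "csubspace M" unfolding M_def csubspace_def
    using linear_0[OF lin] linear_add[OF lin] hom by auto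
  define u where "u = x0 - cproj M x0"
  have "f (cproj M x0) = 0" using cproj_in[OF cl S] by (simp add: M_def)
  hence fu: "f u \<noteq> 0" unfolding u_def using x0 by (simp add: linear_diff[OF lin])
  hence "u \<noteq> 0" using linear_0[OF lin] by auto
  hence uu: "cinner u u \<noteq> 0" using cinner_self_zero[of u] by simp
  have "f x = cinner x (scaleC (cnj (f u / cinner u u)) u)" for x
  proof -
    define m where "m = x - scaleC (f x / f u) u"
    have "f m = 0" unfolding m_def using fu by (simp add: linear_diff[OF lin] hom)
    hence "cinner u m = 0"
      unfolding u_def by (intro cproj_orthogonal[OF cl S]) (simp add: M_def)
    hence "cinner m u = 0" using cinner_commute[of m u] by simp
    hence "cinner x u = (f x / f u) * cinner u u"
      unfolding m_def by (simp add: cinner_diff_left cinner_scaleC_left)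
    thus ?thesis using fu uu by (simp add: cinner_scaleC_right)
  qed
  thus ?thesis by blast
qed

lemma cadjoint_cinner:
  fixes T :: "'a::complex_hilbert \<Rightarrow> 'a"
  assumes T: "bounded_clinear T"
  shows "cinner (T x) y = cinner x (cadjoint T y)"
proof -
  have "\<exists>z. \<forall>x. cinner (T x) y = cinner x z" for y
  proof (rule Riesz_representation)
    show "bounded_linear (\<lambda>x. cinner (T x) y)"
      using bounded_linear_compose[OF bounded_linear_cinner_left
          bounded_clinear_imp_bounded_linear[OF T]]
      by simp
    show "cinner (T (scaleC c x)) y = c * cinner (T x) y" for c x
      by (simp add: bounded_clinear_scaleC[OF T] cinner_scaleC_left)
  qed
  hence "\<exists>S. \<forall>x y. cinner (T x) y = cinner x (S y)" by metis
  hence "\<forall>x y. cinner (T x) y = cinner x (cadjoint T y)"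
    unfolding cadjoint_def by (rule someI_ex)
  thus ?thesis by blast
qed

lemma comp_eq_cadjoint_comp_iff:
  fixes A Q :: "'a::complex_hilbert \<Rightarrow> 'a"
  assumes Q: "bounded_clinear Q" and A: "hermitian A"
  shows "A \<circ> Q = cadjoint Q \<circ> A \<longleftrightarrow> (\<forall>z u. cinner (A (Q z)) u = cinner (A z) (Q u))"
proof -
  have "cinner z (cadjoint Q (A u)) = cinner (A (Q z)) u" for z u
    using A by (simp add: hermitian_def flip: cadjoint_cinner[OF Q])
  moreover have "cinner z (A (Q u)) = cinner (A z) (Q u)" for z u
    using A by (simp add: hermitian_def)
  ultimately have "(\<forall>u. A (Q u) = cadjoint Q (A u)) \<longleftrightarrow>
      (\<forall>z u. cinner (A (Q z)) u = cinner (A z) (Q u))"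
    by (metis cinner_extensionality_right)
  thus ?thesis by (simp add: fun_eq_iff)
qed

lemma compatible_iff_A_selfadjoint_projection:
  fixes A :: "'a::complex_hilbert \<Rightarrow> 'a"
  assumes "hermitian A"
  shows "compatible A S \<longleftrightarrow> (\<exists>Q. bounded_clinear Q \<and> Q \<circ> Q = Q \<and> range Q = S \<and>
      (\<forall>z u. cinner (A (Q z)) u = cinner (A z) (Q u)))"
  unfolding compatible_def using comp_eq_cadjoint_comp_iff[OF _ assms] by blast

section \<open>Open mapping theorem for operators with closed range\<close>

lemma Baire_closed_range:
  fixes B :: "'a::real_normed_vector \<Rightarrow> 'b::complete_space"
  assumes cl: "closed (range B)"
  shows "\<exists>n::nat. \<exists>y0 r. r > 0 \<and> y0 \<in> range B \<and>
    (\<forall>y\<in>range B. dist y0 y < r \<longrightarrow> y \<in> closure (B ` cball 0 (real n)))"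
proof -
  let ?S = "range B"
  let ?X = "top_of_set ?S"
  define F where "F n = ?S \<inter> closure (B ` cball 0 (real n))" for n :: nat
  have cms: "completely_metrizable_space ?X"
  proof (rule completely_metrizable_space_closedin[OF completely_metrizable_space_euclidean])
    show "closedin euclidean ?S" using cl closed_closedin by blast
  qed
  have cover: "\<Union>(range F) = ?S"
  proof (intro equalityI subsetI)
    fix y
    assume "y \<in> ?S"
    then obtain x where x: "y = B x" by blast
    have "x \<in> cball 0 (real (nat \<lceil>norm x\<rceil>))" by (simp add: real_nat_ceiling_ge)
    hence "y \<in> closure (B ` cball 0 (real (nat \<lceil>norm x\<rceil>)))"
      unfolding x by (intro subsetD[OF closure_subset] imageI)
    thus "y \<in> \<Union>(range F)" using \<open>y \<in> ?S\<close> unfolding F_def by blast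
  qed (auto simp: F_def)
  have "\<exists>n. ?X interior_of F n \<noteq> {}"
  proof (rule ccontr)
    assume "\<not> ?thesis"
    hence "?X interior_of \<Union>(range F) = {}"
    proof (intro Baire_category_alt)
      show "countable (range F)" by simp
    qed (use cms in \<open>auto simp: F_def closedin_closed_Int\<close>)
    moreover have "?X interior_of ?S = ?S" using interior_of_topspace[of ?X] by simp
    ultimately show False using cover by auto
  qed
  then obtain n y0 where "y0 \<in> ?X interior_of F n" by blast
  then obtain U where U: "openin ?X U" "y0 \<in> U" "U \<subseteq> F n"
    unfolding interior_of_def by blast
  then obtain r where "r > 0" "ball y0 r \<inter> ?S \<subseteq> U"
    unfolding openin_contains_ball by blast
  with U show ?thesis unfolding F_def by (intro exI[of _ n] exI[of _ y0] exI[of _ r]) auto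
qed

text \<open>Translating the ball found by Baire's theorem back to the origin.\<close>

lemma closed_range_small_approximable:
  fixes B :: "'a::real_normed_vector \<Rightarrow> 'b::banach"
  assumes lin: "linear B" and cl: "closed (range B)"
  shows "\<exists>k \<delta>. \<delta> > 0 \<and>
    (\<forall>y\<in>range B. norm y < \<delta> \<longrightarrow> (\<forall>e>0. \<exists>x. norm x \<le> k \<and> norm (y - B x) < e))"
proof -
  obtain n :: nat and y0 r where r: "r > 0" and y0: "y0 \<in> range B"
    and cov: "\<And>y. y \<in> range B \<Longrightarrow> dist y0 y < r \<Longrightarrow> y \<in> closure (B ` cball 0 (real n))"
    using Baire_closed_range[OF cl] by blast
  have "\<exists>x. norm x \<le> 2 * real n \<and> norm (y - B x) < e"
    if y: "y \<in> range B" "norm y < r" and e: "e > 0" for y e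
  proof -
    have "y0 + y \<in> range B"
      using y0 y(1) by (auto simp flip: linear_add[OF lin])
    hence "y0 + y \<in> closure (B ` cball 0 (real n))" using y(2) by (intro cov) (simp_all add: dist_norm)
    then obtain z1 where "z1 \<in> B ` cball 0 (real n)" "dist z1 (y0 + y) < e / 2"
      using e unfolding closure_approachable by (meson half_gt_zero)
    then obtain x1 where x1: "norm x1 \<le> real n" "dist (B x1) (y0 + y) < e / 2" by auto
    have "y0 \<in> closure (B ` cball 0 (real n))" using y0 r by (intro cov) auto
    then obtain z2 where "z2 \<in> B ` cball 0 (real n)" "dist z2 y0 < e / 2"
      using e unfolding closure_approachable by (meson half_gt_zero)
    then obtain x2 where x2: "norm x2 \<le> real n" "dist (B x2) y0 < e / 2" by auto
    have "y - B (x1 - x2) = (y0 + y - B x1) - (y0 - B x2)" by (simp add: linear_diff[OF lin])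
    hence "norm (y - B (x1 - x2)) \<le> norm (y0 + y - B x1) + norm (y0 - B x2)"
      by (metis norm_triangle_ineq4)
    also have "\<dots> < e" using x1(2) x2(2) by (simp add: dist_norm norm_minus_commute)
    finally show ?thesis
      using norm_triangle_ineq4[of x1 x2] x1(1) x2(1) by (intro exI[of _ "x1 - x2"]) auto
  qed
  thus ?thesis using r by blast
qed

lemma closed_range_half_approximation:
  fixes B :: "'a::real_normed_vector \<Rightarrow> 'b::banach"
  assumes lin: "linear B" and cl: "closed (range B)"
  shows "\<exists>c\<ge>0. \<forall>y\<in>range B. \<exists>x. norm x \<le> c * norm y \<and> norm (y - B x) \<le> norm y / 2"
proof -
  obtain k \<delta> where \<delta>: "\<delta> > 0"
    and approx: "\<And>y e. y \<in> range B \<Longrightarrow> norm y < \<delta> \<Longrightarrow> e > 0 \<Longrightarrow>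
      \<exists>x. norm x \<le> k \<and> norm (y - B x) < e"
    using closed_range_small_approximable[OF lin cl] by blast
  define c where "c = 2 * \<bar>k\<bar> / \<delta>"
  have "\<exists>x. norm x \<le> c * norm y \<and> norm (y - B x) \<le> norm y / 2" if y: "y \<in> range B" for y
  proof (cases "y = 0")
    case True
    thus ?thesis by (intro exI[of _ 0]) (simp add: linear_0[OF lin])
  next
    case False
    define a where "a = \<delta> / (2 * norm y)"
    have a: "a > 0" using \<delta> False by (simp add: a_def)
    have "a *\<^sub>R y \<in> range B" using y by (auto simp flip: linear_scale[OF lin])
    moreover have "norm (a *\<^sub>R y) < \<delta>" using \<delta> a False by (simp add: a_def)
    ultimately obtain x' where x': "norm x' \<le> k" "norm (a *\<^sub>R y - B x') < \<delta> / 4"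
      using approx[of "a *\<^sub>R y" "\<delta> / 4"] \<delta> by auto
    have "y - B (x' /\<^sub>R a) = (a *\<^sub>R y - B x') /\<^sub>R a"
      using a by (simp add: linear_scale[OF lin] scaleR_diff_right)
    hence "norm (y - B (x' /\<^sub>R a)) = norm (a *\<^sub>R y - B x') / a"
      using a by (simp add: divide_inverse_commute)
    also have "\<dots> \<le> (\<delta> / 4) / a" using a by (intro divide_right_mono less_imp_le[OF x'(2)]) simp
    also have "\<dots> = norm y / 2" using \<delta> False by (simp add: a_def)
    finally have "norm (y - B (x' /\<^sub>R a)) \<le> norm y / 2" .
    moreover have "norm (x' /\<^sub>R a) \<le> c * norm y"
      using x'(1) a \<delta> False by (simp add: a_def c_def field_simps)
    ultimately show ?thesis by blast
  qed
  moreover have "c \<ge> 0" using \<delta> by (simp add: c_def)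
  ultimately show ?thesis by blast
qed

lemma preimage_as_series:
  fixes B :: "'a::banach \<Rightarrow> 'b::real_normed_vector"
  assumes bl: "bounded_linear B"
    and partial: "\<And>n. B (\<Sum>i<n. xs i) = y - ys n" and ys: "ys \<longlonglongrightarrow> 0"
    and xs: "\<And>k. norm (xs k) \<le> c * (1/2)^k"
  shows "B (suminf xs) = y" and "norm (suminf xs) \<le> 2 * c"
proof -
  have geom: "summable (\<lambda>k. c * (1/2::real)^k)"
    by (intro summable_mult summable_geometric) simp
  have sum_norm: "summable (\<lambda>k. norm (xs k))"
    by (rule summable_comparison_test'[OF geom]) (simp add: xs)
  have "(\<lambda>n. B (\<Sum>i<n. xs i)) \<longlonglongrightarrow> y"
    unfolding partial using tendsto_diff[OF tendsto_const ys, of y] by simp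
  moreover have "(\<lambda>n. B (\<Sum>i<n. xs i)) \<longlonglongrightarrow> B (suminf xs)"
    by (intro bounded_linear.tendsto[OF bl] summable_LIMSEQ summable_norm_cancel[OF sum_norm])
  ultimately show "B (suminf xs) = y" using LIMSEQ_unique by blast
  have "norm (suminf xs) \<le> (\<Sum>k. norm (xs k))" by (rule summable_norm[OF sum_norm])
  also have "\<dots> \<le> (\<Sum>k. c * (1/2)^k)" by (rule suminf_le[OF _ sum_norm geom]) (simp add: xs)
  also have "\<dots> = c * (\<Sum>k. (1/2::real)^k)" by (rule suminf_mult) simp
  also have "(\<Sum>k. (1/2::real)^k) = 2" by (subst suminf_geometric) simp_all
  finally show "norm (suminf xs) \<le> 2 * c" by (simp add: mult_ac)
qed

text \<open>Iterating the approximation on the residuals \<open>y\<^sub>k\<^sub>+\<^sub>1 = y\<^sub>k - B x\<^sub>k\<close> gives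
  \<open>\<parallel>y\<^sub>k\<parallel> \<le> 2\<^sup>-\<^sup>k \<parallel>y\<parallel>\<close>, so \<open>\<Sum>x\<^sub>k\<close> converges to an exact preimage.\<close>

lemma preimage_by_successive_approximation:
  fixes B :: "'a::banach \<Rightarrow> 'b::real_normed_vector"
  assumes bl: "bounded_linear B" and c: "c \<ge> 0"
    and approx: "\<forall>y\<in>range B. \<exists>x. norm x \<le> c * norm y \<and> norm (y - B x) \<le> norm y / 2"
    and y: "y \<in> range B"
  shows "\<exists>x. B x = y \<and> norm x \<le> 2 * c * norm y"
proof -
  have lin: "linear B" using bl by (rule bounded_linear.linear)
  obtain X where X: "\<And>y. y \<in> range B \<Longrightarrow> norm (X y) \<le> c * norm y \<and> norm (y - B (X y)) \<le> norm y / 2"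
    using approx by metis
  define ys where "ys = rec_nat y (\<lambda>k z. z - B (X z))"
  have ys_0: "ys 0 = y" and ys_Suc: "ys (Suc k) = ys k - B (X (ys k))" for k
    by (simp_all add: ys_def)
  have ys_range: "ys k \<in> range B" for k
    by (induction k) (use y in \<open>auto simp: ys_0 ys_Suc simp flip: linear_diff[OF lin]\<close>)
  have norm_ys: "norm (ys k) \<le> norm y / 2^k" for k
  proof (induction k)
    case 0
    thus ?case by (simp add: ys_0)
  next
    case (Suc k)
    have "norm (ys (Suc k)) \<le> norm (ys k) / 2" using X[OF ys_range[of k]] by (simp add: ys_Suc)
    also have "\<dots> \<le> norm y / 2^Suc k" using Suc.IH by (simp add: divide_right_mono)
    finally show ?case .
  qed
  define xs where "xs k = X (ys k)" for k
  have "norm (xs k) \<le> c * norm y * (1/2)^k" for k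
  proof -
    have "norm (xs k) \<le> c * norm (ys k)" using X[OF ys_range[of k]] by (simp add: xs_def)
    also have "\<dots> \<le> c * (norm y / 2^k)" using c norm_ys by (rule mult_left_mono[rotated])
    finally show ?thesis by (simp add: power_one_over)
  qed
  moreover have "B (\<Sum>i<n. xs i) = y - ys n" for n
    by (induction n) (simp_all add: ys_0 ys_Suc xs_def linear_0[OF lin] linear_add[OF lin])
  moreover have "ys \<longlonglongrightarrow> 0"
    using norm_ys by (intro Lim_null_comparison[OF always_eventually LIMSEQ_divide_realpow_zero]) auto
  ultimately show ?thesis using preimage_as_series[OF bl, of xs y ys "c * norm y"]
    by (auto simp: mult_ac)
qed

lemma open_mapping_closed_range:
  fixes B :: "'a::banach \<Rightarrow> 'b::banach"
  assumes bl: "bounded_linear B" and cl: "closed (range B)"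
  shows "\<exists>C\<ge>0. \<forall>y\<in>range B. \<exists>x. B x = y \<and> norm x \<le> C * norm y"
proof -
  obtain c where "c \<ge> 0"
    and "\<forall>y\<in>range B. \<exists>x. norm x \<le> c * norm y \<and> norm (y - B x) \<le> norm y / 2"
    using closed_range_half_approximation[OF bounded_linear.linear[OF bl] cl] by blast
  thus ?thesis by (intro exI[of _ "2 * c"]) (auto intro: preimage_by_successive_approximation[OF bl])
qed

section \<open>Lifting through an operator with closed range\<close>

instance complex_hilbert \<subseteq> banach ..

lemma kernel_complement_projection:
  fixes B :: "'a::complex_hilbert \<Rightarrow> 'b::complex_inner"
  assumes B: "bounded_clinear B"
  defines "h \<equiv> \<lambda>x. x - cproj {x. B x = 0} x"
  shows "bounded_clinear h" and "B (h x) = B x" and "norm (h x) \<le> norm x"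
    and "B x = B x' \<Longrightarrow> h x = h x'"
proof -
  let ?N = "{x. B x = 0}"
  have lin: "linear B" using B by (rule bounded_clinear_imp_linear)
  note N = closed_kernel[OF B] csubspace_kernel[OF B]
  show "bounded_clinear h"
    unfolding h_def by (intro bounded_clinear_diff bounded_clinear_ident bounded_clinear_cproj N)
  show "B (h x) = B x"
    using cproj_in[OF N, of x] by (simp add: h_def linear_diff[OF lin])
  show "norm (h x) \<le> norm x" unfolding h_def by (rule norm_cproj_le(2)[OF N])
  assume "B x = B x'"
  hence "x - x' \<in> ?N" by (simp add: linear_diff[OF lin])
  hence "cproj ?N (x - x') = x - x'" by (rule cproj_id[OF N])
  moreover have "cproj ?N x = cproj ?N (x - x') + cproj ?N x'"
    using cproj_add[OF N, of "x - x'" x'] by simp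
  ultimately show "h x = h x'" by (simp add: h_def)
qed

lemma bounded_clinear_lift_through_closed_range:
  fixes B :: "'a::complex_hilbert \<Rightarrow> 'b::complex_hilbert" and Q :: "'c::complex_inner \<Rightarrow> 'b"
  assumes B: "bounded_clinear B" and cl: "closed (range B)"
    and Q: "bounded_clinear Q" and Q_range: "range Q \<subseteq> range B"
  shows "\<exists>G. bounded_clinear G \<and> (\<forall>y. B (G y) = Q y)"
proof -
  obtain C where C: "C \<ge> 0" and preimage: "\<And>y. y \<in> range B \<Longrightarrow> \<exists>x. B x = y \<and> norm x \<le> C * norm y"
    using open_mapping_closed_range[OF bounded_clinear_imp_bounded_linear[OF B] cl] by blast
  define h where "h x = x - cproj {x. B x = 0} x" for x
  note h = kernel_complement_projection[OF B, folded h_def]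
  have h_add: "h (x + y) = h x + h y" and h_scaleC: "h (scaleC c x) = scaleC c (h x)" for x y c
    using linear_add[OF bounded_clinear_imp_linear[OF h(1)]] bounded_clinear_scaleC[OF h(1)]
    by simp_all
  define \<sigma> where "\<sigma> y = (SOME x. B x = y)" for y
  have B_\<sigma>: "B (\<sigma> (Q y)) = Q y" for y
  proof -
    have "Q y \<in> range B" using Q_range by (simp add: image_subset_iff)
    hence "\<exists>x. B x = Q y" by (metis rangeE)
    thus ?thesis unfolding \<sigma>_def by (rule someI_ex)
  qed
  define G where "G y = h (\<sigma> (Q y))" for y
  have G_eq: "G y = h x" if "B x = Q y" for x y
    unfolding G_def using that by (intro h(4)) (simp add: B_\<sigma>)
  obtain K where K: "\<And>y. norm (Q y) \<le> norm y * K"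
    using bounded_linear.bounded[OF bounded_clinear_imp_bounded_linear[OF Q]] by blast
  have "bounded_clinear G"
  proof (rule bounded_clinear_intro[where K="C * K"])
    fix y1 y2
    have "B (\<sigma> (Q y1) + \<sigma> (Q y2)) = Q (y1 + y2)"
      using B Q by (simp add: B_\<sigma> linear_add bounded_clinear_imp_linear)
    hence "G (y1 + y2) = h (\<sigma> (Q y1) + \<sigma> (Q y2))" by (rule G_eq)
    thus "G (y1 + y2) = G y1 + G y2" by (simp add: G_def h_add)
  next
    fix c y
    have "B (scaleC c (\<sigma> (Q y))) = Q (scaleC c y)"
      using B Q by (simp add: B_\<sigma> bounded_clinear_scaleC)
    hence "G (scaleC c y) = h (scaleC c (\<sigma> (Q y)))" by (rule G_eq)
    thus "G (scaleC c y) = scaleC c (G y)" by (simp add: G_def h_scaleC)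
  next
    fix y
    obtain x where x: "B x = Q y" "norm x \<le> C * norm (Q y)" using preimage[of "Q y"] Q_range by blast
    have "norm (G y) \<le> C * norm (Q y)" using G_eq[OF x(1)] h(3)[of x] x(2) by simp
    also have "\<dots> \<le> C * (norm y * K)" using K[of y] C by (rule mult_left_mono)
    finally show "norm (G y) \<le> norm y * (C * K)" by (simp add: mult_ac)
  qed
  moreover have "B (G y) = Q y" for y by (simp add: G_def h(2) B_\<sigma>)
  ultimately show ?thesis by blast
qed

section \<open>\<open>A\<close>-inverses and compatibility\<close>

lemma positive_op_hermitian: "positive_op A \<Longrightarrow> hermitian A"
  unfolding positive_op_def
  by (intro hermitian_if_quadratic_real bounded_clinear_imp_linear) (auto simp: bounded_clinear_scaleC)

lemma positive_op_null:
  fixes A :: "'a::complex_inner \<Rightarrow> 'a"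
  assumes A: "positive_op A" and z: "Re (cinner (A z) z) = 0"
  shows "A z = 0"
proof -
  have bA: "bounded_clinear A" using A by (simp add: positive_op_def)
  have "cinner (A z) (A z) = 0"
  proof (rule quadratic_minimizer_orthogonal[OF bounded_clinear_imp_linear[OF bA]
        bounded_clinear_scaleC[OF bA] positive_op_hermitian[OF A]])
    show "csubspace (UNIV :: 'a set)" by (simp add: csubspace_def)
    show "Re (cinner (A z) z) \<le> Re (cinner (A (z - w)) (z - w))" for w
      using z A by (simp add: positive_op_def)
  qed simp
  thus ?thesis using cinner_self_zero[of "A z"] by simp
qed

lemma A_inverse_residual_orthogonal:
  fixes A B G :: "'a::complex_inner \<Rightarrow> 'a"
  assumes A: "positive_op A" and B: "bounded_clinear B" and G: "is_A_inverse A B G"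
    and w: "w \<in> range B"
  shows "cinner (A (y - B (G y))) w = 0"
proof -
  have bA: "bounded_clinear A" using A by (simp add: positive_op_def)
  show ?thesis
  proof (rule quadratic_minimizer_orthogonal[OF bounded_clinear_imp_linear[OF bA]
        bounded_clinear_scaleC[OF bA] positive_op_hermitian[OF A] csubspace_range[OF B] _ w])
    fix w'
    assume "w' \<in> range B"
    then obtain x where "w' = B x" by blast
    hence e: "y - B (G y) - w' = y - B (G y + x)"
      by (simp add: linear_add[OF bounded_clinear_imp_linear[OF B]])
    have "A_norm A (y - B (G y)) \<le> A_norm A (y - B (G y + x))"
      using G by (simp add: is_A_inverse_def)
    thus "Re (cinner (A (y - B (G y))) (y - B (G y)))
        \<le> Re (cinner (A (y - B (G y) - w')) (y - B (G y) - w'))"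
      unfolding e by (simp add: A_norm_def)
  qed
qed

lemma A_selfadjoint_residual_correction:
  fixes A P R :: "'a::complex_inner \<Rightarrow> 'a"
  assumes herm: "hermitian A" and linA: "linear A"
    and orth: "\<And>y w. w \<in> S \<Longrightarrow> cinner (A (y - P y)) w = 0" and P: "\<And>y. P y \<in> S"
    and null: "\<And>v. A (R v) = 0"
  shows "cinner (A (P z + R (z - P z))) u = cinner (A z) (P u + R (u - P u))"
proof -
  have "cinner (A (P z)) (u - P u) = 0"
    using herm orth[where y=u and w="P z", OF P] by (simp add: hermitian_def cinner_commute[of "P z"])
  hence "cinner (A (P z + R (z - P z))) u = cinner (A (P z)) (P u)"
    by (simp add: linear_add[OF linA] null cinner_add_left cinner_diff_right)
  also have "\<dots> = cinner (A z) (P u)"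
    using orth[where y=z and w="P u", OF P] by (simp add: linear_diff[OF linA] cinner_diff_left)
  also have "\<dots> = cinner (A z) (P u + R (u - P u))"
    using herm null by (simp add: cinner_add_right hermitian_def)
  finally show ?thesis .
qed

text \<open>The residual \<open>y - B (G y)\<close> of an \<open>A\<close>-inverse is only determined up to \<open>R(B) \<inter> N(A)\<close>;
  adding back its component in that space makes \<open>Q\<close> act as the identity on \<open>R(B)\<close>.\<close>

lemma A_inverse_imp_compatible:
  fixes A B G :: "'a::complex_hilbert \<Rightarrow> 'a"
  assumes A: "positive_op A" and B: "bounded_clinear B" and cl: "closed (range B)"
    and G: "is_A_inverse A B G"
  shows "compatible A (range B)"
proof -
  have bA: "bounded_clinear A" and bG: "bounded_clinear G"
    using A G by (simp_all add: positive_op_def is_A_inverse_def)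
  have herm: "hermitian A" using A by (rule positive_op_hermitian)
  have linA: "linear A" using bA by (rule bounded_clinear_imp_linear)
  note orth = A_inverse_residual_orthogonal[OF A B G]
  define N where "N = range B \<inter> {s. A s = 0}"
  have N: "closed N" "csubspace N" unfolding N_def
    by (simp_all add: closed_Int cl closed_kernel[OF bA] csubspace_Int csubspace_range[OF B]
        csubspace_kernel[OF bA])
  have A_cproj: "A (cproj N v) = 0" for v using cproj_in[OF N, of v] by (simp add: N_def)
  define Q where "Q y = B (G y) + cproj N (y - B (G y))" for y
  have Q_range: "Q y \<in> range B" for y
    unfolding Q_def using cproj_in[OF N] by (intro csubspace_add[OF csubspace_range[OF B]]) (auto simp: N_def)
  have Q_id: "Q s = s" if s: "s \<in> range B" for s
  proof -
    have d: "s - B (G s) \<in> range B" using s by (intro csubspace_diff[OF csubspace_range[OF B]]) auto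
    hence "A (s - B (G s)) = 0" using orth by (intro positive_op_null[OF A]) simp
    hence "cproj N (s - B (G s)) = s - B (G s)" using d by (intro cproj_id[OF N]) (simp add: N_def)
    thus ?thesis by (simp add: Q_def)
  qed
  have "bounded_clinear Q" unfolding Q_def
    by (intro bounded_clinear_add bounded_clinear_compose[OF B bG]
        bounded_clinear_compose[OF bounded_clinear_cproj[OF N]] bounded_clinear_diff bounded_clinear_ident)
  moreover have "Q \<circ> Q = Q" by (rule ext) (simp add: Q_id[OF Q_range])
  moreover have "range Q = range B" using Q_range Q_id by (metis image_subsetI rangeI subset_antisym subsetI)
  moreover have "cinner (A (Q z)) u = cinner (A z) (Q u)" for z u
    unfolding Q_def using A_selfadjoint_residual_correction[where P="\<lambda>y. B (G y)" and R="cproj N" and S="range B",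
        OF herm linA orth rangeI]
    by (simp add: A_cproj)
  ultimately show ?thesis unfolding compatible_iff_A_selfadjoint_projection[OF herm] by blast
qed

lemma compatible_imp_A_inverse:
  fixes A B :: "'a::complex_hilbert \<Rightarrow> 'a"
  assumes A: "positive_op A" and B: "bounded_clinear B" and cl: "closed (range B)"
    and compat: "compatible A (range B)"
  shows "\<exists>G. is_A_inverse A B G"
proof -
  have herm: "hermitian A" using A by (rule positive_op_hermitian)
  have linA: "linear A" using A by (simp add: positive_op_def bounded_clinear_imp_linear)
  obtain Q where Q: "bounded_clinear Q" and QQ: "Q \<circ> Q = Q" and Q_range: "range Q = range B"
    and Q_sym: "\<And>z u. cinner (A (Q z)) u = cinner (A z) (Q u)"
    using compat unfolding compatible_iff_A_selfadjoint_projection[OF herm] by blast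
  have linQ: "linear Q" using Q by (rule bounded_clinear_imp_linear)
  obtain G where G: "bounded_clinear G" and BG: "\<And>y. B (G y) = Q y"
    using bounded_clinear_lift_through_closed_range[OF B cl Q] Q_range by blast
  have "A_norm A (y - B (G y)) \<le> A_norm A (y - B x)" for y x
  proof -
    define r where "r = y - Q y"
    have "B x \<in> range Q" using Q_range by simp
    then obtain z where z: "B x = Q z" by blast
    define w where "w = Q (y - z)"
    have "Q r = 0" using fun_cong[OF QQ, of y] by (simp add: r_def linear_diff[OF linQ])
    hence rw: "cinner (A r) w = 0" using Q_sym[of r "y - z"] by (simp add: w_def linear_0[OF linA])
    hence "cinner (A w) r = 0" using herm by (simp add: hermitian_def cinner_commute[of w])
    moreover have "y - B x = r + w" by (simp add: r_def w_def z linear_diff[OF linQ])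
    ultimately have "Re (cinner (A r) r) \<le> Re (cinner (A (y - B x)) (y - B x))"
      using cinner_expand_quadratic[OF linA, of r w] rw A by (simp add: positive_op_def)
    thus ?thesis by (simp add: A_norm_def BG r_def)
  qed
  with G show ?thesis unfolding is_A_inverse_def by blast
qed

theorem mainTheorem13:
  fixes A B :: "'a::complex_hilbert \<Rightarrow> 'a"
  assumes "separable_type TYPE('a)"
    and "positive_op A"
    and "bounded_clinear B"
    and "closed (range B)"
  shows "(\<exists>G. is_A_inverse A B G) \<longleftrightarrow> compatible A (range B)"
  using A_inverse_imp_compatible compatible_imp_A_inverse assms(2-4) by blast

end
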